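(* Let $n\ge2$, let $\pi$ be uniform on $\mathrm{PF}_n$ and $f$ uniform on $\widetilde{\mathcal F}_n$. For $g\in\widetilde{\mathcal F}_n$ and $1\le i\le n-1$ let $X_i(g)=1$ if $g(i+1)<g(i)$ and $0$ otherwise. Then for all $t_1,\dots,t_{n-1}\in\{0,1\}$, $$P\{X_1(\pi)=t_1,\dots,X_{n-1}(\pi)=t_{n-1}\}=P\{X_1(f)=t_1,\dots,X_{n-1}(f)=t_{n-1}\}.$$ The same equality of joint distributions holds when $X_i$ is replaced by each of the indicators of $g(i+1)=g(i)$, of $g(i+1)\le g(i)$, of $g(i+1)>g(i)$, and of $g(i+1)\ge g(i)$.
   Context: A parking function of length $n$ is a sequence $(\pi_1,\dots,\pi_n)$ with $1\le\pi_i\le n$ such that $\#\{t:\pi_t\le i\}\ge i$ for all $1\le i\le n$; $\mathrm{PF}_n$ denotes the set of these. $\widetilde{\mathcal F}_n$ is the set of all functions $g:[n]\to[n+1]$ (written as sequences $(g(1),\dots,g(n))$), so $\mathrm{PF}_n\subseteq\widetilde{\mathcal F}_n$ and $|\widetilde{\mathcal F}_n|=(n+1)^n=(n+1)|\mathrm{PF}_n|$. *)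

theory Defs
  imports "HOL-Probability.Probability"
begin

definition Ftilde :: "nat \<Rightarrow> (nat \<Rightarrow> nat) set" where
  "Ftilde n = {1..n} \<rightarrow>\<^sub>E {1..n+1}"

definition PF :: "nat \<Rightarrow> (nat \<Rightarrow> nat) set" where
  "PF n = {p \<in> {1..n} \<rightarrow>\<^sub>E {1..n}.
             \<forall>i\<in>{1..n}. card {t\<in>{1..n}. p t \<le> i} \<ge> i}"

definition Xind :: "(nat \<Rightarrow> nat \<Rightarrow> bool) \<Rightarrow> (nat \<Rightarrow> nat) \<Rightarrow> nat \<Rightarrow> nat" where
  "Xind R g i = (if R (g (i+1)) (g i) then 1 else 0)"

end

theory Submission
  imports Defs
begin

text \<open>Adding \<open>k\<close> to all values of \<open>g \<in> F\<^sub>n\<close> cyclically modulo \<open>n + 1\<close>, exactly one of the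
  \<open>n + 1\<close> shifts of \<open>g\<close> is a parking function (Pollak's cycle argument), so
  \<open>(k, \<pi>) \<mapsto> shift\<^sub>k \<pi>\<close> is a bijection \<open>[n + 1] \<times> PF\<^sub>n \<rightarrow> F\<^sub>n\<close>. It therefore suffices that
  for every \<open>k\<close> as many parking functions have the prescribed pattern after the shift by \<open>k\<close>
  as before. For ties this is clear, the shift being injective on values. For strict or weak
  comparisons the pattern after the shift is a prescribed descent set of the word \<open>\<pi>\<close> with
  respect to the order "shift by \<open>k\<close>, then compare". Being a parking function depends only
  on the multiset of values, and the number of words with given content and given descent set
  does not depend on the order used: by inclusion--exclusion it suffices to count words whose
  descents lie in a set \<open>S\<close>, i.e. words sorted on the blocks cut out by \<open>S\<close>, and re-sorting
  each block for the other order is a bijection.\<close>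

section \<open>Words with a prescribed descent set\<close>

fun sorted_blocks :: "('a \<Rightarrow> 'b::linorder) \<Rightarrow> nat list \<Rightarrow> 'a list \<Rightarrow> bool" where
  "sorted_blocks k [] xs = True"
| "sorted_blocks k (b # bs) xs = (sorted (map k (take b xs)) \<and> sorted_blocks k bs (drop b xs))"

fun sort_blocks :: "('a \<Rightarrow> 'b::linorder) \<Rightarrow> nat list \<Rightarrow> 'a list \<Rightarrow> 'a list" where
  "sort_blocks k [] xs = xs"
| "sort_blocks k (b # bs) xs = sort_key k (take b xs) @ sort_blocks k bs (drop b xs)"

lemma mset_sort_blocks [simp]: "mset (sort_blocks k bs xs) = mset xs"
proof (induction bs arbitrary: xs)
  case (Cons b bs)
  then show ?case by (metis append_take_drop_id mset_append mset_sort sort_blocks.simps(2))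
qed simp

lemma length_sort_blocks [simp]: "length (sort_blocks k bs xs) = length xs"
  by (metis mset_sort_blocks size_mset)

lemma set_sort_blocks [simp]: "set (sort_blocks k bs xs) = set xs"
  by (metis mset_sort_blocks set_mset_mset)

lemma sorted_blocks_sort_blocks:
  "length xs = sum_list bs \<Longrightarrow> sorted_blocks k bs (sort_blocks k bs xs)"
  by (induction bs arbitrary: xs) auto

lemma sort_blocks_id: "sorted_blocks k bs xs \<Longrightarrow> sort_blocks k bs xs = xs"
  by (induction bs arbitrary: xs) (auto simp: sort_key_id_if_sorted)

text \<open>A block sorted by an injective key is determined by its multiset.\<close>
lemma sort_blocks_sort_blocks:
  assumes "inj_on k X" "set xs \<subseteq> X" "length xs = sum_list bs"
  shows "sort_blocks k bs (sort_blocks k' bs xs) = sort_blocks k bs xs"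
  using assms(2,3)
proof (induction bs arbitrary: xs)
  case (Cons b bs)
  have "set (take b xs) \<subseteq> X" "set (drop b xs) \<subseteq> X"
    using Cons.prems(1) by (meson order_trans set_take_subset set_drop_subset)+
  moreover have "sort_key k (sort_key k' (take b xs)) = sort_key k (take b xs)"
    using calculation(1) by (intro sort_key_inj_key_eq) (auto intro: inj_on_subset[OF assms(1)])
  ultimately show ?case using Cons by simp
qed simp

lemma card_sorted_blocks_eq:
  fixes k k' :: "'a \<Rightarrow> 'b::linorder"
  assumes "inj_on k X" "inj_on k' X"
  shows "card {xs. length xs = sum_list bs \<and> set xs \<subseteq> X \<and> P (mset xs) \<and> sorted_blocks k bs xs}
       = card {xs. length xs = sum_list bs \<and> set xs \<subseteq> X \<and> P (mset xs) \<and> sorted_blocks k' bs xs}"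
proof (rule bij_betw_same_card[of "sort_blocks k' bs"],
       rule bij_betw_byWitness[where f' = "sort_blocks k bs"])
qed (auto simp: sorted_blocks_sort_blocks sort_blocks_id
          sort_blocks_sort_blocks[OF assms(1)] sort_blocks_sort_blocks[OF assms(2)])

definition descents :: "('a \<Rightarrow> 'b::linorder) \<Rightarrow> 'a list \<Rightarrow> nat set" where
  "descents k xs = {j. Suc j < length xs \<and> k (xs ! Suc j) < k (xs ! j)}"

definition weakly_ascending_at :: "('a \<Rightarrow> 'b::linorder) \<Rightarrow> bool list \<Rightarrow> 'a list \<Rightarrow> bool" where
  "weakly_ascending_at k cs xs \<longleftrightarrow> (\<forall>j<length cs. cs ! j \<longrightarrow> k (xs ! j) \<le> k (xs ! Suc j))"

text \<open>\<open>block_lengths cs\<close> cuts a word of length \<open>length cs + 1\<close> into blocks, an entry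
  \<^const>\<open>True\<close> at position \<open>j\<close> putting positions \<open>j\<close> and \<open>j + 1\<close> into the same block.\<close>
fun block_lengths :: "bool list \<Rightarrow> nat list" where
  "block_lengths [] = [1]"
| "block_lengths (True # cs) = (case block_lengths cs of [] \<Rightarrow> [] | b # bs \<Rightarrow> Suc b # bs)"
| "block_lengths (False # cs) = 1 # block_lengths cs"

lemma block_lengths_Cons_pos: "\<exists>b bs. block_lengths cs = Suc b # bs"
  by (induction cs rule: block_lengths.induct) (auto split: list.split)

lemma sum_list_block_lengths: "sum_list (block_lengths cs) = Suc (length cs)"
proof (induction cs rule: block_lengths.induct)
  case (2 cs)
  then show ?case using block_lengths_Cons_pos[of cs] by auto
qed auto

lemma weakly_ascending_at_Cons:
  "weakly_ascending_at k (c # cs) (x # y # ys) \<longleftrightarrow>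
     (c \<longrightarrow> k x \<le> k y) \<and> weakly_ascending_at k cs (y # ys)"
  unfolding weakly_ascending_at_def by (auto simp: less_Suc_eq_0_disj)

lemma sorted_blocks_block_lengths:
  "length xs = Suc (length cs) \<Longrightarrow>
     sorted_blocks k (block_lengths cs) xs \<longleftrightarrow> weakly_ascending_at k cs xs"
proof (induction cs arbitrary: xs rule: block_lengths.induct)
  case 1
  then show ?case by (cases xs) (auto simp: weakly_ascending_at_def)
next
  case (2 cs)
  obtain x y ys where xs: "xs = x # y # ys" using "2.prems" by (metis Suc_length_conv)
  obtain b bs where b: "block_lengths cs = Suc b # bs" using block_lengths_Cons_pos by blast
  have "sorted_blocks k (block_lengths cs) (y # ys) \<longleftrightarrow> weakly_ascending_at k cs (y # ys)"
    using "2.IH" "2.prems" xs by simp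
  then show ?case by (auto simp: xs b weakly_ascending_at_Cons sorted2 simp del: sorted_simps(2))
next
  case (3 cs)
  obtain x y ys where xs: "xs = x # y # ys" using "3.prems" by (metis Suc_length_conv)
  with 3 show ?case by (simp add: weakly_ascending_at_Cons)
qed

lemma descents_subset_iff:
  "length xs = Suc N \<Longrightarrow>
     descents k xs \<subseteq> S \<longleftrightarrow> weakly_ascending_at k (map (\<lambda>j. j \<notin> S) [0..<N]) xs"
  unfolding descents_def weakly_ascending_at_def by (auto simp: not_less)

lemma card_descents_subset_eq:
  fixes k k' :: "'a \<Rightarrow> 'b::linorder"
  assumes "inj_on k X" "inj_on k' X"
  shows "card {xs. length xs = Suc N \<and> set xs \<subseteq> X \<and> P (mset xs) \<and> descents k xs \<subseteq> S}
       = card {xs. length xs = Suc N \<and> set xs \<subseteq> X \<and> P (mset xs) \<and> descents k' xs \<subseteq> S}"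
proof -
  let ?bs = "block_lengths (map (\<lambda>j. j \<notin> S) [0..<N])"
  have "{xs. length xs = Suc N \<and> set xs \<subseteq> X \<and> P (mset xs) \<and> descents k xs \<subseteq> S}
      = {xs. length xs = sum_list ?bs \<and> set xs \<subseteq> X \<and> P (mset xs) \<and> sorted_blocks k ?bs xs}"
    for k :: "'a \<Rightarrow> 'b"
    using descents_subset_iff[of _ N k S] sorted_blocks_block_lengths[of _ "map (\<lambda>j. j \<notin> S) [0..<N]" k]
    by (auto simp: sum_list_block_lengths)
  then show ?thesis using card_sorted_blocks_eq[OF assms] by simp
qed

lemma sum_Pow_eq_imp_eq:
  fixes a b :: "'a set \<Rightarrow> 'c::cancel_comm_monoid_add"
  assumes "finite U" and "\<And>S. S \<subseteq> U \<Longrightarrow> (\<Sum>D\<in>Pow S. a D) = (\<Sum>D\<in>Pow S. b D)"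
    and "S \<subseteq> U"
  shows "a S = b S"
  using assms(3)
proof (induction "card S" arbitrary: S rule: less_induct)
  case less
  have "finite S" using less.prems assms(1) finite_subset by blast
  have "a D = b D" if "D \<in> Pow S - {S}" for D
    using that less psubset_card_mono[OF \<open>finite S\<close>] by auto
  then have "(\<Sum>D\<in>Pow S - {S}. a D) = (\<Sum>D\<in>Pow S - {S}. b D)" by (rule sum.cong[OF refl])
  moreover have "(\<Sum>D\<in>Pow S. c D) = c S + (\<Sum>D\<in>Pow S - {S}. c D)" for c :: "'a set \<Rightarrow> 'c"
    using \<open>finite S\<close> by (simp add: sum.remove)
  ultimately show ?case using assms(2)[OF less.prems] by simp
qed

lemma card_descents_eq:
  fixes k k' :: "'a \<Rightarrow> 'b::linorder"
  assumes "inj_on k X" "inj_on k' X" "finite X"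
  shows "card {xs. length xs = Suc N \<and> set xs \<subseteq> X \<and> P (mset xs) \<and> descents k xs = D}
       = card {xs. length xs = Suc N \<and> set xs \<subseteq> X \<and> P (mset xs) \<and> descents k' xs = D}"
proof (cases "D \<subseteq> {..<N}")
  case True
  define W where "W k D = {xs. length xs = Suc N \<and> set xs \<subseteq> X \<and> P (mset xs) \<and> descents k xs = D}"
    for k :: "'a \<Rightarrow> 'b" and D
  have "finite (W k D)" for k D
    unfolding W_def by (rule finite_subset[OF _ finite_lists_length_eq[OF assms(3)]]) blast
  have "(\<Sum>D\<in>Pow S. card (W k D))
      = card {xs. length xs = Suc N \<and> set xs \<subseteq> X \<and> P (mset xs) \<and> descents k xs \<subseteq> S}"
    if "S \<subseteq> {..<N}" for S k
  proof -
    have "{xs. length xs = Suc N \<and> set xs \<subseteq> X \<and> P (mset xs) \<and> descents k xs \<subseteq> S}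
        = (\<Union>D\<in>Pow S. W k D)"
      unfolding W_def by blast
    moreover have "card (\<Union>D\<in>Pow S. W k D) = (\<Sum>D\<in>Pow S. card (W k D))"
      using finite_subset[OF that] \<open>\<And>k D. finite (W k D)\<close>
      by (intro card_UN_disjoint) (auto simp: W_def)
    ultimately show ?thesis by simp
  qed
  then have "card (W k D) = card (W k' D)"
    using card_descents_subset_eq[OF assms(1,2)] True
    by (intro sum_Pow_eq_imp_eq[of "{..<N}" "\<lambda>D. card (W k D)" "\<lambda>D. card (W k' D)"]) simp_all
  then show ?thesis unfolding W_def .
next
  case False
  then have "{xs. length xs = Suc N \<and> set xs \<subseteq> X \<and> P (mset xs) \<and> descents k xs = D} = {}"
    for k :: "'a \<Rightarrow> 'b"
    unfolding descents_def by auto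
  then show ?thesis by (simp only:)
qed

section \<open>Pollak's cycle argument\<close>

definition cyc_shift :: "nat \<Rightarrow> nat \<Rightarrow> nat \<Rightarrow> nat" where
  "cyc_shift m k v = (v + k - 1) mod m + 1"

lemma cyc_shift_in: "0 < m \<Longrightarrow> cyc_shift m k v \<in> {1..m}"
  unfolding cyc_shift_def by (auto simp: Suc_le_eq)

lemma cyc_shift_0: "v \<in> {1..m} \<Longrightarrow> cyc_shift m 0 v = v"
  unfolding cyc_shift_def by auto

lemma cyc_shift_cyc_shift: "1 \<le> v \<Longrightarrow> cyc_shift m a (cyc_shift m b v) = cyc_shift m (a + b) v"
proof -
  assume "1 \<le> v"
  then have "v + (a + b) - 1 = a + (v + b - 1)" by simp
  then show ?thesis unfolding cyc_shift_def by (simp add: mod_add_right_eq add.commute)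
qed

lemma cyc_shift_mod: "1 \<le> v \<Longrightarrow> cyc_shift m (k mod m) v = cyc_shift m k v"
proof -
  assume "1 \<le> v"
  then have "v + k mod m - 1 = (v - 1) + k mod m" "v + k - 1 = (v - 1) + k" by auto
  then show ?thesis unfolding cyc_shift_def by (simp add: mod_add_right_eq)
qed

lemma cyc_shift_inverse:
  assumes "v \<in> {1..m}"
  shows "cyc_shift m (m - k mod m) (cyc_shift m k v) = v"
proof -
  have "cyc_shift m (m - k mod m) (cyc_shift m k v) = cyc_shift m ((m - k mod m + k) mod m) v"
    using assms by (simp add: cyc_shift_cyc_shift cyc_shift_mod)
  also have "(m - k mod m + k) mod m = (m - k mod m + k mod m) mod m"
    by (simp add: mod_add_right_eq)
  also have "m - k mod m + k mod m = m"
    using assms mod_less_divisor[of m k] by simp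
  finally show ?thesis using assms by (simp add: cyc_shift_0)
qed

lemma inj_on_cyc_shift: "inj_on (cyc_shift m k) {1..m}"
  by (rule inj_on_inverseI[where g = "cyc_shift m (m - k mod m)"]) (rule cyc_shift_inverse)

lemma cyc_shift_diff:
  assumes "v \<in> {1..m}" "j \<in> {1..m}"
  shows "cyc_shift m (m - j) v = (if v \<le> j then v + m - j else v - j)"
proof (cases "v \<le> j")
  case True
  then have "v + (m - j) - 1 < m" using assms by auto
  then show ?thesis using True assms unfolding cyc_shift_def by auto
next
  case False
  then have "v + (m - j) - 1 = (v - j - 1) + m" "v - j - 1 < m" using assms by auto
  then have "(v + (m - j) - 1) mod m = v - j - 1" by (simp only: mod_add_self2 mod_less)
  then show ?thesis using False unfolding cyc_shift_def by simp
qed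

lemma cycle_lemma_unique:
  fixes H :: "nat \<Rightarrow> int"
  assumes per: "\<And>x. x \<in> {1..m} \<Longrightarrow> H (x + m) = H x - 1"
    and "a \<in> {1..m}" "\<forall>i\<in>{1..<m}. H a \<le> H (a + i)"
    and "b \<in> {1..m}" "\<forall>i\<in>{1..<m}. H b \<le> H (b + i)"
  shows "a = b"
proof -
  have False if "x < y" and x: "x \<in> {1..m}" "\<forall>i\<in>{1..<m}. H x \<le> H (x + i)"
    and y: "y \<in> {1..m}" "\<forall>i\<in>{1..<m}. H y \<le> H (y + i)" for x y
  proof -
    have "y - x \<in> {1..<m}" "m - (y - x) \<in> {1..<m}" using that by auto
    then have "H x \<le> H (x + (y - x))" "H y \<le> H (y + (m - (y - x)))" using x(2) y(2) by blast+
    moreover have "x + (y - x) = y" "y + (m - (y - x)) = x + m" using that by auto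
    ultimately show False using per[OF x(1)] by (simp add: add.commute)
  qed
  then show ?thesis using assms(2-5) by (metis linorder_neqE_nat)
qed

text \<open>The witness is the first point of the period where the walk attains its minimum.\<close>
lemma cycle_lemma:
  fixes H :: "nat \<Rightarrow> int"
  assumes "0 < m" and per: "\<And>x. x \<in> {1..m} \<Longrightarrow> H (x + m) = H x - 1"
  shows "\<exists>!j. j \<in> {1..m} \<and> (\<forall>i\<in>{1..<m}. H j \<le> H (j + i))"
proof -
  define \<mu> where "\<mu> = Min (H ` {1..m})"
  have \<mu>_le: "\<mu> \<le> H x" if "x \<in> {1..m}" for x unfolding \<mu>_def using that by simp
  have "\<mu> \<in> H ` {1..m}" unfolding \<mu>_def using assms(1) by (intro Min_in) auto
  then obtain x0 where x0: "x0 \<in> {1..m}" "H x0 = \<mu>" by auto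
  define j where "j = (LEAST x. x \<in> {1..m} \<and> H x = \<mu>)"
  have j: "j \<in> {1..m}" "H j = \<mu>"
    using LeastI[of "\<lambda>x. x \<in> {1..m} \<and> H x = \<mu>", OF conjI[OF x0]] unfolding j_def by auto
  have "H j \<le> H (j + i)" if i: "i \<in> {1..<m}" for i
  proof (cases "j + i \<le> m")
    case True
    then show ?thesis using \<mu>_le[of "j + i"] j i by auto
  next
    case False
    define y where "y = j + i - m"
    have y: "y \<in> {1..m}" "y < j" "j + i = y + m" using False i j unfolding y_def by auto
    then have "H y \<noteq> \<mu>" using not_less_Least[of y "\<lambda>x. x \<in> {1..m} \<and> H x = \<mu>"] unfolding j_def by blast
    then show ?thesis using \<mu>_le[OF y(1)] per[OF y(1)] y(3) j by simp
  qed
  then show ?thesis using j(1) cycle_lemma_unique[of m H, OF per] by blast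
qed

lemma Ftilde_values: "f \<in> Ftilde n \<Longrightarrow> t \<in> {1..n} \<Longrightarrow> f t \<in> {1..Suc n}"
  unfolding Ftilde_def by auto

lemma PF_subset_Ftilde: "PF n \<subseteq> Ftilde n"
  unfolding PF_def Ftilde_def using PiE_mono[of "{1..n}" "\<lambda>_. {1..n}" "\<lambda>_. {1..Suc n}"] by auto

lemma finite_Ftilde: "finite (Ftilde n)"
  unfolding Ftilde_def by (simp add: finite_PiE)

lemma Ftilde_nonempty: "Ftilde n \<noteq> {}"
  unfolding Ftilde_def by (simp add: PiE_eq_empty_iff)

definition shift_values :: "nat \<Rightarrow> nat \<Rightarrow> (nat \<Rightarrow> nat) \<Rightarrow> nat \<Rightarrow> nat" where
  "shift_values n k p = restrict (\<lambda>t. cyc_shift (Suc n) k (p t)) {1..n}"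

lemma shift_values_in_Ftilde: "shift_values n k p \<in> Ftilde n"
  unfolding shift_values_def Ftilde_def using cyc_shift_in[of "Suc n" k] by auto

lemma shift_values_0: "p \<in> Ftilde n \<Longrightarrow> shift_values n 0 p = p"
  unfolding shift_values_def Ftilde_def
  by (auto simp: fun_eq_iff PiE_iff extensional_def cyc_shift_0)

lemma shift_values_inverse:
  assumes "p \<in> Ftilde n" "k < Suc n"
  shows "shift_values n ((Suc n - k) mod Suc n) (shift_values n k p) = p"
proof -
  have "cyc_shift (Suc n) ((Suc n - k) mod Suc n) (cyc_shift (Suc n) k (p t)) = p t"
    if "t \<in> {1..n}" for t
  proof -
    have "p t \<in> {1..Suc n}" using Ftilde_values[OF assms(1) that] .
    then show ?thesis
      using assms(2) cyc_shift_in[of "Suc n" k "p t"] cyc_shift_inverse[of "p t" "Suc n" k]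
      by (simp add: cyc_shift_mod)
  qed
  then show ?thesis
    using assms unfolding shift_values_def Ftilde_def by (auto simp: fun_eq_iff PiE_iff extensional_def)
qed

text \<open>The number of points in \<open>[1, x]\<close> of the value multiset of \<open>f\<close> repeated with period
  \<open>n + 1\<close>, for \<open>x \<le> 2 (n + 1)\<close>.\<close>
definition lifted_count :: "nat \<Rightarrow> (nat \<Rightarrow> nat) \<Rightarrow> nat \<Rightarrow> nat" where
  "lifted_count n f x = card {t\<in>{1..n}. f t \<le> x} + card {t\<in>{1..n}. f t + Suc n \<le> x}"

lemma lifted_count_add_period:
  assumes "f \<in> Ftilde n" "x \<le> Suc n"
  shows "lifted_count n f (x + Suc n) = n + lifted_count n f x"
proof -
  have "{t\<in>{1..n}. f t \<le> x + Suc n} = {1..n}" "{t\<in>{1..n}. f t + Suc n \<le> x} = {}"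
    using assms(2) Ftilde_values[OF assms(1)] by fastforce+
  then show ?thesis unfolding lifted_count_def by simp
qed

lemma card_cyc_shift_le:
  assumes f: "f \<in> Ftilde n" and j: "j \<in> {1..Suc n}" and "i \<le> Suc n"
  shows "card {t\<in>{1..n}. cyc_shift (Suc n) (Suc n - j) (f t) \<le> i} + lifted_count n f j
       = lifted_count n f (j + i)"
proof -
  define Wrap where "Wrap = {t\<in>{1..n}. f t \<le> j \<and> f t + Suc n \<le> j + i}"
  define Mid where "Mid = {t\<in>{1..n}. j < f t \<and> f t \<le> j + i}"
  define Low where "Low = {t\<in>{1..n}. f t \<le> j}"
  have "{t\<in>{1..n}. cyc_shift (Suc n) (Suc n - j) (f t) \<le> i} = Wrap \<union> Mid"
    unfolding Wrap_def Mid_def using cyc_shift_diff[OF Ftilde_values[OF f] j] j by auto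
  moreover have "lifted_count n f j = card Low"
    unfolding lifted_count_def Low_def using Ftilde_values[OF f] j by (fastforce intro: arg_cong[where f = card])
  moreover have "lifted_count n f (j + i) = card (Low \<union> Mid) + card Wrap"
    unfolding lifted_count_def Low_def Mid_def Wrap_def using assms(3)
    by (auto intro!: arg_cong2[where f = "(+)"] arg_cong[where f = card])
  moreover have "Wrap \<inter> Mid = {}" "Low \<inter> Mid = {}" "finite Wrap" "finite Mid" "finite Low"
    unfolding Wrap_def Mid_def Low_def by auto
  ultimately show ?thesis by (simp add: card_Un_disjoint)
qed

lemma shift_values_in_PF_iff:
  assumes "f \<in> Ftilde n"
  shows "shift_values n k f \<in> PF n \<longleftrightarrow>
    (\<forall>i\<in>{1..n}. i \<le> card {t\<in>{1..n}. cyc_shift (Suc n) k (f t) \<le> i})"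
    (is "_ \<longleftrightarrow> (\<forall>i\<in>{1..n}. i \<le> card (?C i))")
proof -
  have C: "card {t\<in>{1..n}. shift_values n k f t \<le> i} = card (?C i)" for i
    unfolding shift_values_def by (auto intro: arg_cong[where f = card])
  have range: "shift_values n k f \<in> {1..n} \<rightarrow>\<^sub>E {1..n} \<longleftrightarrow>
      (\<forall>t\<in>{1..n}. cyc_shift (Suc n) k (f t) \<le> n)"
    using cyc_shift_in[of "Suc n" k] by (auto simp: shift_values_def PiE_iff)
  have "cyc_shift (Suc n) k (f t) \<le> n" if "\<forall>i\<in>{1..n}. i \<le> card (?C i)" "t \<in> {1..n}" for t
  proof -
    have "?C n = {1..n}" using that by (intro card_seteq) auto
    then show ?thesis using that(2) by blast
  qed
  then show ?thesis by (auto simp only: PF_def mem_Collect_eq C range)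
qed

theorem ex1_shift_values_in_PF:
  assumes f: "f \<in> Ftilde n"
  shows "\<exists>!k. k < Suc n \<and> shift_values n k f \<in> PF n"
proof -
  define H where "H x = int (lifted_count n f x) - int x" for x
  have record_iff: "shift_values n (Suc n - j) f \<in> PF n \<longleftrightarrow> (\<forall>i\<in>{1..<Suc n}. H j \<le> H (j + i))"
    if j: "j \<in> {1..Suc n}" for j
  proof -
    have "i \<le> card {t\<in>{1..n}. cyc_shift (Suc n) (Suc n - j) (f t) \<le> i} \<longleftrightarrow> H j \<le> H (j + i)"
      if "i \<in> {1..n}" for i
      using card_cyc_shift_le[OF f j, of i] that unfolding H_def by auto
    then show ?thesis
      unfolding shift_values_in_PF_iff[OF f] by (simp add: atLeastLessThanSuc_atLeastAtMost)
  qed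
  have "\<exists>!j. j \<in> {1..Suc n} \<and> (\<forall>i\<in>{1..<Suc n}. H j \<le> H (j + i))"
  proof (rule cycle_lemma)
    fix x assume "x \<in> {1..Suc n}"
    then show "H (x + Suc n) = H x - 1" using lifted_count_add_period[OF f, of x] by (simp add: H_def)
  qed simp
  then obtain j where j: "j \<in> {1..Suc n}" "shift_values n (Suc n - j) f \<in> PF n"
    and uniq: "\<And>j'. j' \<in> {1..Suc n} \<Longrightarrow> shift_values n (Suc n - j') f \<in> PF n \<Longrightarrow> j' = j"
    using record_iff by blast
  show ?thesis
  proof (rule ex1I[of _ "Suc n - j"])
    show "Suc n - j < Suc n \<and> shift_values n (Suc n - j) f \<in> PF n" using j by auto
  next
    fix k assume "k < Suc n \<and> shift_values n k f \<in> PF n"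
    then show "k = Suc n - j" using uniq[of "Suc n - k"] by auto
  qed
qed

lemma bij_betw_shift_values:
  "bij_betw (\<lambda>(k, p). shift_values n k p) ({..<Suc n} \<times> PF n) (Ftilde n)"
proof (rule bij_betw_imageI)
  show "inj_on (\<lambda>(k, p). shift_values n k p) ({..<Suc n} \<times> PF n)"
  proof (rule inj_onI, clarsimp)
    fix k1 p1 k2 p2
    assume k: "k1 < Suc n" "k2 < Suc n" and p: "p1 \<in> PF n" "p2 \<in> PF n"
      and eq: "shift_values n k1 p1 = shift_values n k2 p2"
    define f where "f = shift_values n k1 p1"
    have pF: "p1 \<in> Ftilde n" "p2 \<in> Ftilde n" using p PF_subset_Ftilde by auto
    have recover: "shift_values n ((Suc n - k1) mod Suc n) f = p1"
      "shift_values n ((Suc n - k2) mod Suc n) f = p2"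
      using shift_values_inverse[OF pF(1) k(1)] shift_values_inverse[OF pF(2) k(2)] eq
      unfolding f_def by simp_all
    then have "(Suc n - k1) mod Suc n = (Suc n - k2) mod Suc n"
      using ex1_shift_values_in_PF[OF shift_values_in_Ftilde[of n k1 p1]] p
      unfolding f_def by (metis mod_less_divisor zero_less_Suc)
    then have "k1 = k2" using k by (cases "k1 = 0"; cases "k2 = 0") auto
    then show "k1 = k2 \<and> p1 = p2" using recover by simp
  qed
next
  show "(\<lambda>(k, p). shift_values n k p) ` ({..<Suc n} \<times> PF n) = Ftilde n"
  proof
    show "Ftilde n \<subseteq> (\<lambda>(k, p). shift_values n k p) ` ({..<Suc n} \<times> PF n)"
    proof
      fix f assume f: "f \<in> Ftilde n"
      then obtain k where "k < Suc n" "shift_values n k f \<in> PF n"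
        using ex1_shift_values_in_PF by blast
      then show "f \<in> (\<lambda>(k, p). shift_values n k p) ` ({..<Suc n} \<times> PF n)"
        using shift_values_inverse[OF f] by (intro image_eqI[of _ _ "((Suc n - k) mod Suc n, _)"]) auto
    qed
  qed (auto simp: shift_values_in_Ftilde)
qed

lemma card_Ftilde_Int:
  "card (Ftilde n \<inter> E) = (\<Sum>k<Suc n. card {p\<in>PF n. shift_values n k p \<in> E})"
proof -
  let ?h = "\<lambda>(k, p). shift_values n k p"
  let ?C = "SIGMA k:{..<Suc n}. {p\<in>PF n. shift_values n k p \<in> E}"
  have bij: "bij_betw ?h ({..<Suc n} \<times> PF n) (Ftilde n)" by (rule bij_betw_shift_values)
  then have image: "?h ` ?C = Ftilde n \<inter> E" unfolding bij_betw_def by force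
  have "inj_on ?h ?C" using bij unfolding bij_betw_def by (auto intro: inj_on_subset)
  then have "card (Ftilde n \<inter> E) = card ?C" unfolding image[symmetric] by (rule card_image)
  also have "\<dots> = (\<Sum>k<Suc n. card {p\<in>PF n. shift_values n k p \<in> E})"
    using finite_subset[OF PF_subset_Ftilde finite_Ftilde] by (simp add: card_SigmaI)
  finally show ?thesis .
qed

lemma prob_PF_eq_prob_Ftilde:
  assumes "\<And>k. k < Suc n \<Longrightarrow> card {p\<in>PF n. shift_values n k p \<in> E} = card (PF n \<inter> E)"
  shows "measure_pmf.prob (pmf_of_set (PF n)) E = measure_pmf.prob (pmf_of_set (Ftilde n)) E"
proof -
  have event: "card (Ftilde n \<inter> E) = Suc n * card (PF n \<inter> E)"
    using card_Ftilde_Int[of n E] assms by simp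
  have total: "card (Ftilde n) = Suc n * card (PF n)"
    using card_Ftilde_Int[of n UNIV] by simp
  then have "PF n \<noteq> {}"
    using finite_Ftilde[of n] Ftilde_nonempty[of n] by (force simp: card_eq_0_iff)
  then have "measure_pmf.prob (pmf_of_set (PF n)) E = card (PF n \<inter> E) / card (PF n)"
    using finite_subset[OF PF_subset_Ftilde finite_Ftilde] by (simp add: measure_pmf_of_set)
  also have "\<dots> = card (Ftilde n \<inter> E) / card (Ftilde n)"
    unfolding event total of_nat_mult by (simp del: of_nat_Suc)
  also have "\<dots> = measure_pmf.prob (pmf_of_set (Ftilde n)) E"
    using finite_Ftilde Ftilde_nonempty by (simp add: measure_pmf_of_set)
  finally show ?thesis .
qed

section \<open>Comparison patterns of parking functions\<close>

definition word_of :: "nat \<Rightarrow> (nat \<Rightarrow> nat) \<Rightarrow> nat list" where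
  "word_of n p = map p [1..<Suc n]"

definition fun_of_word :: "nat \<Rightarrow> nat list \<Rightarrow> nat \<Rightarrow> nat" where
  "fun_of_word n xs = restrict (\<lambda>i. xs ! (i - 1)) {1..n}"

definition parking_mset :: "nat \<Rightarrow> nat multiset \<Rightarrow> bool" where
  "parking_mset n M \<longleftrightarrow> (\<forall>i\<in>{1..n}. i \<le> size (filter_mset (\<lambda>v. v \<le> i) M))"

lemma length_word_of [simp]: "length (word_of n p) = n"
  unfolding word_of_def by simp

lemma nth_word_of: "j < n \<Longrightarrow> word_of n p ! j = p (Suc j)"
  unfolding word_of_def by (simp add: nth_upt del: upt_Suc)

lemma word_of_fun_of_word: "length xs = n \<Longrightarrow> word_of n (fun_of_word n xs) = xs"
  unfolding word_of_def fun_of_word_def by (rule nth_equalityI) (auto simp: nth_upt simp del: upt_Suc)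

lemma fun_of_word_word_of: "p \<in> extensional {1..n} \<Longrightarrow> fun_of_word n (word_of n p) = p"
  unfolding word_of_def fun_of_word_def
  by (auto simp: fun_eq_iff extensional_def nth_upt simp del: upt_Suc)

lemma card_le_eq_size_filter_word_of:
  "card {t\<in>{1..n}. p t \<le> i} = size (filter_mset (\<lambda>v. v \<le> i) (mset (word_of n p)))"
proof -
  have "size (filter_mset (\<lambda>v. v \<le> i) (mset (word_of n p))) = length (filter (\<lambda>v. v \<le> i) (word_of n p))"
    by (metis mset_filter size_mset)
  also have "\<dots> = length (filter (\<lambda>t. p t \<le> i) [1..<Suc n])"
    unfolding word_of_def by (simp add: filter_map comp_def del: upt_Suc)
  also have "\<dots> = card {t\<in>{1..n}. p t \<le> i}"
    by (subst distinct_length_filter) (auto simp del: upt_Suc intro: arg_cong[where f = card])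
  finally show ?thesis by simp
qed

lemma PF_iff_parking_mset:
  "p \<in> PF n \<longleftrightarrow> p \<in> extensional {1..n} \<and> set (word_of n p) \<subseteq> {1..n} \<and> parking_mset n (mset (word_of n p))"
  unfolding PF_def parking_mset_def card_le_eq_size_filter_word_of
  by (auto simp: PiE_iff word_of_def image_subset_iff simp del: upt_Suc)

lemma card_PF_descents_eq:
  fixes k k' :: "nat \<Rightarrow> 'b::linorder"
  assumes "inj_on k {1..n}" "inj_on k' {1..n}" "1 \<le> n"
  shows "card {p\<in>PF n. descents k (word_of n p) = D} = card {p\<in>PF n. descents k' (word_of n p) = D}"
proof -
  have "card {p\<in>PF n. descents k (word_of n p) = D} =
      card {xs. length xs = n \<and> set xs \<subseteq> {1..n} \<and> parking_mset n (mset xs) \<and> descents k xs = D}"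
    for k :: "nat \<Rightarrow> 'b"
  proof (rule bij_betw_same_card, rule bij_betw_byWitness[where f' = "fun_of_word n"])
    show "\<forall>p\<in>{p\<in>PF n. descents k (word_of n p) = D}. fun_of_word n (word_of n p) = p"
      using PF_iff_parking_mset fun_of_word_word_of by blast
    show "\<forall>xs\<in>{xs. length xs = n \<and> set xs \<subseteq> {1..n} \<and> parking_mset n (mset xs) \<and> descents k xs = D}.
        word_of n (fun_of_word n xs) = xs"
      using word_of_fun_of_word by blast
    show "word_of n ` {p\<in>PF n. descents k (word_of n p) = D}
        \<subseteq> {xs. length xs = n \<and> set xs \<subseteq> {1..n} \<and> parking_mset n (mset xs) \<and> descents k xs = D}"
      using PF_iff_parking_mset by auto
    have "fun_of_word n xs \<in> extensional {1..n}" for xs unfolding fun_of_word_def by simp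
    then show "fun_of_word n ` {xs. length xs = n \<and> set xs \<subseteq> {1..n} \<and> parking_mset n (mset xs) \<and>
        descents k xs = D} \<subseteq> {p\<in>PF n. descents k (word_of n p) = D}"
      using PF_iff_parking_mset word_of_fun_of_word by auto
  qed
  moreover obtain N where "n = Suc N" using assms(3) by (cases n) auto
  ultimately show ?thesis using card_descents_eq[OF assms(1,2), of N] by simp
qed

lemma shift_values_in_event_iff:
  assumes "\<forall>i\<in>{1..n-1}. t i \<in> {0, 1}"
  shows "shift_values n k p \<in> {g. \<forall>i\<in>{1..n-1}. Xind R g i = t i} \<longleftrightarrow>
    (\<forall>i\<in>{1..n-1}. R (cyc_shift (Suc n) k (p (Suc i))) (cyc_shift (Suc n) k (p i)) \<longleftrightarrow> t i = 1)"
proof -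
  have "Xind R (shift_values n k p) i = t i \<longleftrightarrow>
      (R (cyc_shift (Suc n) k (p (Suc i))) (cyc_shift (Suc n) k (p i)) \<longleftrightarrow> t i = 1)"
    if i: "i \<in> {1..n-1}" for i
  proof -
    have "i \<in> {1..n}" "Suc i \<in> {1..n}" using i by auto
    then have "Xind R (shift_values n k p) i =
        (if R (cyc_shift (Suc n) k (p (Suc i))) (cyc_shift (Suc n) k (p i)) then 1 else 0)"
      by (simp add: Xind_def shift_values_def)
    moreover have "t i = 0 \<or> t i = 1" using assms i by blast
    ultimately show ?thesis by auto
  qed
  then show ?thesis by blast
qed

lemma descents_word_of:
  "descents k (word_of n p) = {j. Suc j < n \<and> k (p (Suc (Suc j))) < k (p (Suc j))}"
  unfolding descents_def by (auto simp: nth_word_of)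

lemma ball_1_pred_iff_all_Suc: "(\<forall>i\<in>{1..n-1}. P i) \<longleftrightarrow> (\<forall>j. Suc j < n \<longrightarrow> P (Suc j))"
proof (intro iffI allI impI ballI)
  fix i assume "\<forall>j. Suc j < n \<longrightarrow> P (Suc j)" "i \<in> {1..n-1}"
  then show "P i" by (cases i) auto
qed auto

lemma PF_Int_eq_shift_values_0: "{p\<in>PF n. shift_values n 0 p \<in> E} = PF n \<inter> E"
  using shift_values_0 PF_subset_Ftilde by fastforce

lemma prob_event_eq_of_key:
  fixes \<kappa> :: "nat \<Rightarrow> nat"
  assumes n: "1 \<le> n" and t: "\<forall>i\<in>{1..n-1}. t i \<in> {0, 1}" and \<kappa>: "inj_on \<kappa> {1..Suc n}"
    and R: "\<And>x y. x \<in> {1..Suc n} \<Longrightarrow> y \<in> {1..Suc n} \<Longrightarrow> R y x \<longleftrightarrow> (\<kappa> y < \<kappa> x) = b"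
  shows "measure_pmf.prob (pmf_of_set (PF n)) {g. \<forall>i\<in>{1..n-1}. Xind R g i = t i}
       = measure_pmf.prob (pmf_of_set (Ftilde n)) {g. \<forall>i\<in>{1..n-1}. Xind R g i = t i}"
proof (rule prob_PF_eq_prob_Ftilde)
  let ?E = "{g. \<forall>i\<in>{1..n-1}. Xind R g i = t i}"
  let ?key = "\<lambda>k. \<kappa> \<circ> cyc_shift (Suc n) k"
  define D where "D = {j. Suc j < n \<and> (t (Suc j) = 1) = b}"
  have event_iff: "shift_values n k p \<in> ?E \<longleftrightarrow> descents (?key k) (word_of n p) = D" for k p
  proof -
    have "R (cyc_shift (Suc n) k y) (cyc_shift (Suc n) k x) \<longleftrightarrow> (?key k y < ?key k x) = b" for x y
      using R[OF cyc_shift_in cyc_shift_in] by simp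
    then have "shift_values n k p \<in> ?E \<longleftrightarrow>
        (\<forall>j. Suc j < n \<longrightarrow> ((?key k (p (Suc (Suc j))) < ?key k (p (Suc j))) = b \<longleftrightarrow> t (Suc j) = 1))"
      unfolding shift_values_in_event_iff[OF t] unfolding ball_1_pred_iff_all_Suc by simp
    also have "\<dots> \<longleftrightarrow> descents (?key k) (word_of n p) = D"
      unfolding descents_word_of D_def by blast
    finally show ?thesis .
  qed
  have key_inj: "inj_on (?key k) {1..n}" for k
  proof (rule comp_inj_on)
    show "inj_on (cyc_shift (Suc n) k) {1..n}" by (rule inj_on_subset[OF inj_on_cyc_shift]) auto
    show "inj_on \<kappa> (cyc_shift (Suc n) k ` {1..n})"
      using cyc_shift_in[of "Suc n" k] by (intro inj_on_subset[OF \<kappa>]) blast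
  qed
  fix k
  have "card {p\<in>PF n. shift_values n k p \<in> ?E} = card {p\<in>PF n. descents (?key k) (word_of n p) = D}"
    by (simp only: event_iff)
  also have "\<dots> = card {p\<in>PF n. descents (?key 0) (word_of n p) = D}"
    by (rule card_PF_descents_eq[OF key_inj key_inj n])
  also have "\<dots> = card (PF n \<inter> ?E)"
    by (simp only: event_iff[symmetric] PF_Int_eq_shift_values_0)
  finally show "card {p\<in>PF n. shift_values n k p \<in> ?E} = card (PF n \<inter> ?E)" .
qed

lemma prob_event_eq_equal:
  assumes t: "\<forall>i\<in>{1..n-1}. t i \<in> {0, 1}"
  shows "measure_pmf.prob (pmf_of_set (PF n)) {g. \<forall>i\<in>{1..n-1}. Xind (=) g i = t i}
       = measure_pmf.prob (pmf_of_set (Ftilde n)) {g. \<forall>i\<in>{1..n-1}. Xind (=) g i = t i}"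
proof (rule prob_PF_eq_prob_Ftilde)
  let ?E = "{g. \<forall>i\<in>{1..n-1}. Xind (=) g i = t i}"
  fix k
  have "shift_values n k p \<in> ?E \<longleftrightarrow> shift_values n 0 p \<in> ?E" if "p \<in> PF n" for p
  proof -
    have p: "p i \<in> {1..Suc n}" if "i \<in> {1..n}" for i
      using \<open>p \<in> PF n\<close> that PF_subset_Ftilde Ftilde_values by blast
    have "cyc_shift (Suc n) k (p (Suc i)) = cyc_shift (Suc n) k (p i) \<longleftrightarrow>
        cyc_shift (Suc n) 0 (p (Suc i)) = cyc_shift (Suc n) 0 (p i)" if "i \<in> {1..n-1}" for i
    proof -
      have "p i \<in> {1..Suc n}" "p (Suc i) \<in> {1..Suc n}" using p that by auto
      then show ?thesis by (simp add: inj_on_eq_iff[OF inj_on_cyc_shift] cyc_shift_0)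
    qed
    then show ?thesis unfolding shift_values_in_event_iff[OF t] by blast
  qed
  then have "{p\<in>PF n. shift_values n k p \<in> ?E} = {p\<in>PF n. shift_values n 0 p \<in> ?E}" by blast
  then show "card {p\<in>PF n. shift_values n k p \<in> ?E} = card (PF n \<inter> ?E)"
    using PF_Int_eq_shift_values_0[of n ?E] by (simp only:)
qed

theorem theorem7:
  fixes n :: nat and t :: "nat \<Rightarrow> nat" and R :: "nat \<Rightarrow> nat \<Rightarrow> bool"
  assumes "n \<ge> 2"
    and "\<forall>i\<in>{1..n-1}. t i \<in> {0, 1}"
    and "R \<in> {(<), (=), (\<le>), (>), (\<ge>)}"
  shows "measure_pmf.prob (pmf_of_set (PF n))
           {g. \<forall>i\<in>{1..n-1}. Xind R g i = t i}
       = measure_pmf.prob (pmf_of_set (Ftilde n))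
           {g. \<forall>i\<in>{1..n-1}. Xind R g i = t i}"
proof -
  have n: "1 \<le> n" using assms(1) by simp
  have rev_inj: "inj_on (\<lambda>v. Suc n - v) {1..Suc n}" by (auto simp: inj_on_def)
  consider (lt) "R = (<)" | (eq) "R = (=)" | (le) "R = (\<le>)" | (gt) "R = (>)" | (ge) "R = (\<ge>)"
    using assms(3) by blast
  then show ?thesis
  proof cases
    case lt
    show ?thesis unfolding lt by (rule prob_event_eq_of_key[OF n assms(2), where \<kappa> = id and b = True]) auto
  next
    case eq
    show ?thesis unfolding eq by (rule prob_event_eq_equal[OF assms(2)])
  next
    case le
    show ?thesis unfolding le by (rule prob_event_eq_of_key[OF n assms(2) rev_inj, where b = False]) auto
  next
    case gt
    show ?thesis unfolding gt by (rule prob_event_eq_of_key[OF n assms(2) rev_inj, where b = True]) auto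
  next
    case ge
    show ?thesis unfolding ge by (rule prob_event_eq_of_key[OF n assms(2), where \<kappa> = id and b = False]) auto
  qed
qed

end
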